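(* Let $G$ be a finite group with $Z(G)=I$, and suppose there is an integer $n_0\ge 3$ such that $l^i(D_1,\dots,D_n)\ge1$ for all class vectors $(D_1,\dots,D_n)$ of $G$ of length $n\in\{n_0,n_0+1,\dots,2n_0-1\}$. Then $$l^i(C_1,\dots,C_m)\ge |G|^{k-1}$$ for every class vector $(C_1,\dots,C_m)$ of $G$ of length $m=k\cdot n_0+l$ with $l\in\{0,1,\dots,n_0-1\}$ and $k\ge2$.
   Context: $I$ is the trivial group and $\iota$ the identity. A class vector of length $k$ is a tuple of $k$ non-trivial conjugacy classes. $\Sigma^i(C_1,\dots,C_k)$ is the set of $G$-conjugacy classes (simultaneous conjugation) of tuples $(\sigma_1,\dots,\sigma_k)$ with $\sigma_j\in C_j$, $\langle\sigma_1,\dots,\sigma_k\rangle=G$, $\sigma_1\cdots\sigma_k=\iota$, and $l^i(C_1,\dots,C_k)=|\Sigma^i(C_1,\dots,C_k)|$. *)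

theory Defs
  imports "HOL-Algebra.Algebra"
begin

definition group_center :: "('a, 'b) monoid_scheme \<Rightarrow> 'a set" where
  "group_center G = {z \<in> carrier G. \<forall>x \<in> carrier G. z \<otimes>\<^bsub>G\<^esub> x = x \<otimes>\<^bsub>G\<^esub> z}"

definition conj_class :: "('a, 'b) monoid_scheme \<Rightarrow> 'a \<Rightarrow> 'a set" where
  "conj_class G x = {g \<otimes>\<^bsub>G\<^esub> x \<otimes>\<^bsub>G\<^esub> inv\<^bsub>G\<^esub> g | g. g \<in> carrier G}"

definition nontriv_class :: "('a, 'b) monoid_scheme \<Rightarrow> 'a set \<Rightarrow> bool" where
  "nontriv_class G C \<longleftrightarrow> (\<exists>x \<in> carrier G. x \<noteq> \<one>\<^bsub>G\<^esub> \<and> C = conj_class G x)"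

definition class_vector :: "('a, 'b) monoid_scheme \<Rightarrow> 'a set list \<Rightarrow> bool" where
  "class_vector G Cs \<longleftrightarrow> (\<forall>C \<in> set Cs. nontriv_class G C)"

definition list_prod :: "('a, 'b) monoid_scheme \<Rightarrow> 'a list \<Rightarrow> 'a" where
  "list_prod G xs = foldr (\<lambda>x y. x \<otimes>\<^bsub>G\<^esub> y) xs \<one>\<^bsub>G\<^esub>"

definition gen_tuples :: "('a, 'b) monoid_scheme \<Rightarrow> 'a set list \<Rightarrow> 'a list set" where
  "gen_tuples G Cs = {\<sigma>s. length \<sigma>s = length Cs \<and> (\<forall>j < length Cs. \<sigma>s ! j \<in> Cs ! j)
      \<and> generate G (set \<sigma>s) = carrier G \<and> list_prod G \<sigma>s = \<one>\<^bsub>G\<^esub>}"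

definition sim_conj :: "('a, 'b) monoid_scheme \<Rightarrow> ('a list \<times> 'a list) set" where
  "sim_conj G = {(\<sigma>s, \<tau>s). \<exists>g \<in> carrier G.
      \<tau>s = map (\<lambda>s. g \<otimes>\<^bsub>G\<^esub> s \<otimes>\<^bsub>G\<^esub> inv\<^bsub>G\<^esub> g) \<sigma>s}"

definition Sigma_i :: "('a, 'b) monoid_scheme \<Rightarrow> 'a set list \<Rightarrow> 'a list set set" where
  "Sigma_i G Cs = gen_tuples G Cs // (sim_conj G \<inter> (gen_tuples G Cs \<times> gen_tuples G Cs))"

definition l_i :: "('a, 'b) monoid_scheme \<Rightarrow> 'a set list \<Rightarrow> nat" where
  "l_i G Cs = card (Sigma_i G Cs)"

end

theory Submission
  imports Defs
begin

text \<open>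
  Since the centre is trivial, conjugation acts freely on generating tuples, so every nonempty
  set of generating tuples has at least \<open>|G|\<close> elements, and each simultaneous conjugacy class
  has at most \<open>|G|\<close> elements. Cutting a class vector of length \<open>k n\<^sub>0 + l\<close> into \<open>k - 1\<close> blocks
  of length \<open>n\<^sub>0\<close> and one block of length \<open>n\<^sub>0 + l \<le> 2 n\<^sub>0 - 1\<close>, and concatenating generating
  tuples of the blocks, gives at least \<open>|G|\<^sup>k\<close> generating tuples for the whole vector, hence at
  least \<open>|G|\<^sup>k\<^sup>-\<^sup>1\<close> classes.
\<close>

definition conjugate :: "('a, 'b) monoid_scheme \<Rightarrow> 'a \<Rightarrow> 'a \<Rightarrow> 'a" where
  "conjugate G g x = g \<otimes>\<^bsub>G\<^esub> x \<otimes>\<^bsub>G\<^esub> inv\<^bsub>G\<^esub> g"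

context group
begin

lemma conjugate_closed [simp]:
  "g \<in> carrier G \<Longrightarrow> x \<in> carrier G \<Longrightarrow> conjugate G g x \<in> carrier G"
  by (simp add: conjugate_def)

lemma conjugate_mult:
  "g \<in> carrier G \<Longrightarrow> x \<in> carrier G \<Longrightarrow> y \<in> carrier G \<Longrightarrow>
    conjugate G g (x \<otimes> y) = conjugate G g x \<otimes> conjugate G g y"
  by (simp add: conjugate_def m_assoc) (simp add: m_assoc [symmetric])

lemma conjugate_inv:
  "g \<in> carrier G \<Longrightarrow> x \<in> carrier G \<Longrightarrow> conjugate G g (inv x) = inv (conjugate G g x)"
  by (simp add: conjugate_def inv_mult_group m_assoc)

lemma conjugate_one [simp]: "g \<in> carrier G \<Longrightarrow> conjugate G g \<one> = \<one>"
  by (simp add: conjugate_def)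

lemma conjugate_by_one [simp]: "x \<in> carrier G \<Longrightarrow> conjugate G \<one> x = x"
  by (simp add: conjugate_def)

lemma conjugate_conjugate:
  "g \<in> carrier G \<Longrightarrow> h \<in> carrier G \<Longrightarrow> x \<in> carrier G \<Longrightarrow>
    conjugate G g (conjugate G h x) = conjugate G (g \<otimes> h) x"
  by (simp add: conjugate_def inv_mult_group m_assoc)

lemma conjugate_eq_iff_commute:
  "c \<in> carrier G \<Longrightarrow> x \<in> carrier G \<Longrightarrow> conjugate G c x = x \<longleftrightarrow> c \<otimes> x = x \<otimes> c"
  by (metis conjugate_def inv_solve_right m_closed)

lemma conjugate_in_conj_class:
  assumes "x \<in> carrier G" "y \<in> conj_class G x" "g \<in> carrier G"
  shows "conjugate G g y \<in> conj_class G x"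
proof -
  obtain h where h: "h \<in> carrier G" "y = conjugate G h x"
    using assms(2) unfolding conj_class_def conjugate_def by auto
  then have "conjugate G g y = conjugate G (g \<otimes> h) x"
    using assms by (simp add: conjugate_conjugate)
  then show ?thesis
    using assms h unfolding conj_class_def conjugate_def by auto
qed

lemma generate_image_conjugate:
  assumes "g \<in> carrier G" "S \<subseteq> carrier G"
  shows "conjugate G g ` generate G S \<subseteq> generate G (conjugate G g ` S)"
proof clarify
  fix x assume "x \<in> generate G S"
  then show "conjugate G g x \<in> generate G (conjugate G g ` S)"
  proof induction
    case (eng x y)
    then show ?case
      using assms by (simp add: conjugate_mult generate.eng generate_in_carrier)
  qed (use assms in \<open>auto simp: conjugate_inv generate.intros\<close>)
qed

lemma generate_conjugate_eq_carrier:
  assumes "g \<in> carrier G" "generate G S = carrier G"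
  shows "generate G (conjugate G g ` S) = carrier G"
proof
  have S: "S \<subseteq> carrier G"
    using generate.incl[of _ S G] assms(2) by blast
  then show "generate G (conjugate G g ` S) \<subseteq> carrier G"
    using assms(1) by (intro generate_incl) auto
  show "carrier G \<subseteq> generate G (conjugate G g ` S)"
  proof
    fix x assume x: "x \<in> carrier G"
    then have "x = conjugate G g (conjugate G (inv g) x)"
      using assms(1) by (simp add: conjugate_conjugate)
    moreover have "conjugate G (inv g) x \<in> generate G S"
      using assms x by simp
    ultimately show "x \<in> generate G (conjugate G g ` S)"
      using generate_image_conjugate[OF assms(1) S] by blast
  qed
qed

lemma conjugate_fixes_generate:
  assumes "c \<in> carrier G" "S \<subseteq> carrier G" "\<forall>s \<in> S. conjugate G c s = s"
    and "x \<in> generate G S"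
  shows "conjugate G c x = x"
  using assms(4)
proof induction
  case (eng x y)
  then show ?case
    using assms(1,2) by (simp add: conjugate_mult generate_in_carrier)
qed (use assms in \<open>auto simp: conjugate_inv\<close>)

lemma conjugate_eq_on_generators_imp_eq:
  assumes "group_center G = {\<one>}" and "generate G S = carrier G"
    and g: "g \<in> carrier G" and h: "h \<in> carrier G"
    and "\<forall>s \<in> S. conjugate G g s = conjugate G h s"
  shows "g = h"
proof -
  have S: "S \<subseteq> carrier G"
    using generate.incl[of _ S G] assms(2) by blast
  have "conjugate G (inv h \<otimes> g) s = s" if "s \<in> S" for s
  proof -
    have s: "s \<in> carrier G"
      using S that by blast
    have "conjugate G (inv h \<otimes> g) s = conjugate G (inv h) (conjugate G g s)"
      using s g h by (simp add: conjugate_conjugate)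
    also have "\<dots> = conjugate G (inv h) (conjugate G h s)"
      using assms(5) that by simp
    also have "\<dots> = s"
      using s h by (simp add: conjugate_conjugate)
    finally show ?thesis .
  qed
  then have "\<forall>x \<in> carrier G. conjugate G (inv h \<otimes> g) x = x"
    using conjugate_fixes_generate[OF _ S] assms(2) g h by simp
  then have "inv h \<otimes> g \<in> group_center G"
    using g h by (simp add: group_center_def conjugate_eq_iff_commute)
  then have "inv h \<otimes> g = \<one>"
    using assms(1) by blast
  then show "g = h"
    using g h by (simp add: inv_solve_left')
qed

lemma list_prod_closed: "set xs \<subseteq> carrier G \<Longrightarrow> list_prod G xs \<in> carrier G"
  by (induction xs) (auto simp: list_prod_def)

lemma list_prod_append:
  "set xs \<subseteq> carrier G \<Longrightarrow> set ys \<subseteq> carrier G \<Longrightarrow>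
    list_prod G (xs @ ys) = list_prod G xs \<otimes> list_prod G ys"
  by (induction xs) (auto simp: list_prod_def m_assoc list_prod_closed[unfolded list_prod_def])

lemma list_prod_map_conjugate:
  "g \<in> carrier G \<Longrightarrow> set xs \<subseteq> carrier G \<Longrightarrow>
    list_prod G (map (conjugate G g) xs) = conjugate G g (list_prod G xs)"
  by (induction xs) (auto simp: list_prod_def conjugate_mult list_prod_closed[unfolded list_prod_def])

end

lemma class_vector_append [simp]:
  "class_vector G (As @ Bs) \<longleftrightarrow> class_vector G As \<and> class_vector G Bs"
  by (auto simp: class_vector_def)

lemma gen_tuples_nonempty_if_l_i_pos: "1 \<le> l_i G Cs \<Longrightarrow> gen_tuples G Cs \<noteq> {}"
  by (auto simp: l_i_def Sigma_i_def)

lemma gen_tuples_subset_carrier: "\<sigma>s \<in> gen_tuples G Cs \<Longrightarrow> set \<sigma>s \<subseteq> carrier G"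
  unfolding gen_tuples_def using generate.incl[of _ "set \<sigma>s" G] by auto

lemma finite_gen_tuples:
  assumes "finite (carrier G)"
  shows "finite (gen_tuples G Cs)"
proof (rule finite_subset)
  show "gen_tuples G Cs \<subseteq> {xs. set xs \<subseteq> carrier G \<and> length xs = length Cs}"
    using gen_tuples_subset_carrier by (auto simp: gen_tuples_def)
  show "finite {xs. set xs \<subseteq> carrier G \<and> length xs = length Cs}"
    using finite_lists_length_eq[OF assms] .
qed

lemma append_in_gen_tuples:
  assumes "group G" "\<tau>s \<in> gen_tuples G As" "\<sigma>s \<in> gen_tuples G Bs"
  shows "\<tau>s @ \<sigma>s \<in> gen_tuples G (As @ Bs)"
proof -
  interpret group G by fact
  have carr: "set \<tau>s \<subseteq> carrier G" "set \<sigma>s \<subseteq> carrier G"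
    using assms(2,3) gen_tuples_subset_carrier by blast+
  have "carrier G = generate G (set \<sigma>s)"
    using assms(3) by (simp add: gen_tuples_def)
  also have "\<dots> \<subseteq> generate G (set (\<tau>s @ \<sigma>s))"
    by (intro mono_generate) auto
  finally have "generate G (set (\<tau>s @ \<sigma>s)) = carrier G"
    using carr by (intro equalityI generate_incl) auto
  with assms(2,3) carr show ?thesis
    by (auto simp: gen_tuples_def nth_append list_prod_append)
qed

lemma card_gen_tuples_append:
  assumes "group G" "finite (carrier G)"
  shows "card (gen_tuples G As) * card (gen_tuples G Bs) \<le> card (gen_tuples G (As @ Bs))"
proof -
  let ?append = "\<lambda>(\<tau>s, \<sigma>s). \<tau>s @ \<sigma>s"
  have "inj_on ?append (gen_tuples G As \<times> gen_tuples G Bs)"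
    by (rule inj_onI) (auto simp: gen_tuples_def)
  moreover have "?append ` (gen_tuples G As \<times> gen_tuples G Bs) \<subseteq> gen_tuples G (As @ Bs)"
    using append_in_gen_tuples[OF assms(1)] by auto
  ultimately have "card (gen_tuples G As \<times> gen_tuples G Bs) \<le> card (gen_tuples G (As @ Bs))"
    using finite_gen_tuples[OF assms(2)] by (rule card_inj_on_le)
  then show ?thesis
    by (simp add: card_cartesian_product)
qed

lemma map_conjugate_in_gen_tuples:
  assumes "group G" "class_vector G Cs" "\<sigma>s \<in> gen_tuples G Cs" "g \<in> carrier G"
  shows "map (conjugate G g) \<sigma>s \<in> gen_tuples G Cs"
proof -
  interpret group G by fact
  have carr: "set \<sigma>s \<subseteq> carrier G"
    using assms(3) by (rule gen_tuples_subset_carrier)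
  have "map (conjugate G g) \<sigma>s ! j \<in> Cs ! j" if j: "j < length Cs" for j
  proof -
    obtain x where "x \<in> carrier G" "Cs ! j = conj_class G x"
      using assms(2) nth_mem[OF j] by (auto simp: class_vector_def nontriv_class_def)
    then show ?thesis
      using assms(3,4) j conjugate_in_conj_class by (auto simp: gen_tuples_def)
  qed
  moreover have "generate G (set (map (conjugate G g) \<sigma>s)) = carrier G"
    using generate_conjugate_eq_carrier[OF assms(4)] assms(3) by (simp add: gen_tuples_def)
  moreover have "list_prod G (map (conjugate G g) \<sigma>s) = \<one>\<^bsub>G\<^esub>"
    using assms(3,4) carr by (simp add: gen_tuples_def list_prod_map_conjugate)
  ultimately show ?thesis
    using assms(3) by (simp add: gen_tuples_def)
qed

lemma order_le_card_gen_tuples: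
  assumes "group G" "finite (carrier G)" "group_center G = {\<one>\<^bsub>G\<^esub>}"
    and "class_vector G Cs" "gen_tuples G Cs \<noteq> {}"
  shows "order G \<le> card (gen_tuples G Cs)"
proof -
  interpret group G by fact
  obtain \<sigma>s where \<sigma>s: "\<sigma>s \<in> gen_tuples G Cs"
    using assms(5) by blast
  have gen: "generate G (set \<sigma>s) = carrier G"
    using \<sigma>s by (simp add: gen_tuples_def)
  have "inj_on (\<lambda>g. map (conjugate G g) \<sigma>s) (carrier G)"
  proof (rule inj_onI)
    fix g h
    assume "g \<in> carrier G" "h \<in> carrier G" "map (conjugate G g) \<sigma>s = map (conjugate G h) \<sigma>s"
    then show "g = h"
      using conjugate_eq_on_generators_imp_eq[OF assms(3) gen] by simp
  qed
  moreover have "(\<lambda>g. map (conjugate G g) \<sigma>s) ` carrier G \<subseteq> gen_tuples G Cs"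
    using map_conjugate_in_gen_tuples[OF assms(1,4) \<sigma>s] by auto
  ultimately show ?thesis
    unfolding order_def using finite_gen_tuples[OF assms(2)] by (rule card_inj_on_le)
qed

lemma card_gen_tuples_le_order_mult_l_i:
  assumes "group G" "finite (carrier G)"
  shows "card (gen_tuples G Cs) \<le> order G * l_i G Cs"
proof -
  interpret group G by fact
  let ?T = "gen_tuples G Cs"
  let ?R = "sim_conj G \<inter> ?T \<times> ?T"
  have "\<sigma>s \<in> ?R `` {\<sigma>s}" if "\<sigma>s \<in> ?T" for \<sigma>s
  proof -
    have "map (conjugate G \<one>\<^bsub>G\<^esub>) \<sigma>s = \<sigma>s"
      using gen_tuples_subset_carrier[OF that] by (intro map_idI) auto
    then show ?thesis
      using that unfolding sim_conj_def conjugate_def by force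
  qed
  then have partition: "?T = \<Union>(?T // ?R)"
    by (auto simp: quotient_def)
  have class_card: "card (?R `` {\<sigma>s}) \<le> order G" for \<sigma>s
  proof -
    have "?R `` {\<sigma>s} \<subseteq> (\<lambda>g. map (conjugate G g) \<sigma>s) ` carrier G"
      by (auto simp: sim_conj_def conjugate_def)
    then have "card (?R `` {\<sigma>s}) \<le> card ((\<lambda>g. map (conjugate G g) \<sigma>s) ` carrier G)"
      using assms(2) by (intro card_mono finite_imageI)
    also have "\<dots> \<le> order G"
      unfolding order_def using assms(2) by (rule card_image_le)
    finally show ?thesis .
  qed
  have "card ?T \<le> sum card (?T // ?R)"
    using card_Union_le_sum_card[of "?T // ?R"] partition by simp
  also have "\<dots> \<le> sum (\<lambda>_. order G) (?T // ?R)"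
    using class_card by (intro sum_mono) (auto elim: quotientE)
  also have "\<dots> = order G * l_i G Cs"
    by (simp add: l_i_def Sigma_i_def)
  finally show ?thesis .
qed

lemma order_pow_le_card_gen_tuples:
  assumes "group G" "finite (carrier G)" "group_center G = {\<one>\<^bsub>G\<^esub>}"
    and short: "\<And>Ds. class_vector G Ds \<Longrightarrow> n0 \<le> length Ds \<Longrightarrow> length Ds \<le> 2 * n0 - 1
      \<Longrightarrow> gen_tuples G Ds \<noteq> {}"
    and "l < n0"
  shows "0 < k \<Longrightarrow> class_vector G Cs \<Longrightarrow> length Cs = k * n0 + l
    \<Longrightarrow> order G ^ k \<le> card (gen_tuples G Cs)"
proof (induction k arbitrary: Cs rule: nat_induct_non_zero)
  case 1
  then show ?case
    using order_le_card_gen_tuples[OF assms(1-3)] short assms(5) by simp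
next
  case (Suc k)
  let ?As = "take n0 Cs" and ?Bs = "drop n0 Cs"
  have "class_vector G ?As" "class_vector G ?Bs"
    using Suc.prems(1) class_vector_append[of G ?As ?Bs] by simp_all
  moreover have "length ?As = n0" "length ?Bs = k * n0 + l"
    using Suc.prems(2) by simp_all
  ultimately have "order G * order G ^ k \<le> card (gen_tuples G ?As) * card (gen_tuples G ?Bs)"
    using order_le_card_gen_tuples[OF assms(1-3)] short assms(5) Suc.IH by (intro mult_le_mono) simp_all
  also have "\<dots> \<le> card (gen_tuples G Cs)"
    using card_gen_tuples_append[OF assms(1,2), of ?As ?Bs] by simp
  finally show ?case
    by simp
qed

theorem proposition13:
  fixes G :: "('a, 'b) monoid_scheme" and n0 :: nat
  assumes "group G" and "finite (carrier G)"
    and "group_center G = {\<one>\<^bsub>G\<^esub>}"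
    and "n0 \<ge> 3"
    and "\<And>Ds. class_vector G Ds \<Longrightarrow> n0 \<le> length Ds \<Longrightarrow> length Ds \<le> 2 * n0 - 1
           \<Longrightarrow> l_i G Ds \<ge> 1"
  shows "\<forall>Cs k l. class_vector G Cs \<and> length Cs = k * n0 + l \<and> l < n0 \<and> k \<ge> 2
           \<longrightarrow> l_i G Cs \<ge> order G ^ (k - 1)"
proof (intro allI impI, elim conjE)
  fix Cs k l
  assume Cs: "class_vector G Cs" "length Cs = k * n0 + l" "l < n0" "k \<ge> 2"
  have short: "gen_tuples G Ds \<noteq> {}"
    if "class_vector G Ds" "n0 \<le> length Ds" "length Ds \<le> 2 * n0 - 1" for Ds
    using assms(5)[OF that] by (rule gen_tuples_nonempty_if_l_i_pos)
  have "order G * order G ^ (k - 1) = order G ^ k"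
    using Cs(4) by (simp flip: power_Suc)
  also have "\<dots> \<le> card (gen_tuples G Cs)"
    using order_pow_le_card_gen_tuples[OF assms(1-3) short Cs(3)] Cs by simp
  also have "\<dots> \<le> order G * l_i G Cs"
    using assms(1,2) by (rule card_gen_tuples_le_order_mult_l_i)
  finally show "order G ^ (k - 1) \<le> l_i G Cs"
    using group.is_monoid[OF assms(1)] assms(2) by (simp add: monoid.order_gt_0_iff_finite)
qed

end
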